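(* For every $N$-relay FD 1-2-1 network with graph $G=([0:N+1],E)$ and positive rational link capacities as in the context, the linear program P1 has an optimal solution $(x_p)_{p\in\mathcal P}$ with at most $2N+2$ indices $p$ such that $x_p>0$. Consequently $\mathsf{C}_{\rm cs,iid}$ (FD states) can be achieved by activating at most $2N+2$ paths.
   Context: Nodes are $[0:N+1]$; node $0$ is the source, $N+1$ the destination, $[1:N]$ relays. $E\subseteq\{(i,j): i\in[0:N],\ j\in[1:N+1],\ i\ne j\}$ is a set of directed links; each $(i,j)\in E$ has a positive rational capacity $\ell_{j,i}$. Paths: $\mathcal P$ is the set of all directed paths $p=(v_0,\dots,v_m)$ of distinct nodes with $v_0=0$, $v_m=N+1$ and $(v_{k-1},v_k)\in E$. For $i$ on $p$, $p.\mathrm{nx}(i)$, $p.\mathrm{pr}(i)$ are the nodes following and preceding $i$ on $p$; $\mathcal P_i$ is the set of paths containing $i$. $\mathsf C_p=\min_{(i,j)\text{ consecutive on }p}\ell_{j,i}$ and $f^p_{j,i}=\mathsf C_p/\ell_{j,i}$ for consecutive $(i,j)$ on $p$. P1 is the linear program $\max\sum_{p\in\mathcal P}x_p\mathsf C_p$ subject to $x_p\ge0$ for all $p$; $\sum_{p\in\mathcal P_i}x_p f^p_{p.\mathrm{nx}(i),i}\le1$ for all $i\in[0:N]$; $\sum_{p\in\mathcal P_i}x_pf^p_{i,p.\mathrm{pr}(i)}\le1$ for all $i\in[1:N+1]$. Its optimal value equals $\mathsf{C}_{\rm cs,iid}$, the FD approximate capacity $\max_\lambda\min_\Omega\sum_{i\in\Omega,j\in\Omega^c}(\sum_{s:\,(i,j)\text{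 active in } s}\lambda_s)\ell_{j,i}$ (FD states, $0\in\Omega\subseteq[0:N]$). *)

theory Defs
  imports Complex_Main
begin

text \<open>A link from i to j is the pair (i,j) in E; its capacity is l j i (paper: l_{j,i}).\<close>

definition valid_links :: "nat \<Rightarrow> (nat \<times> nat) set \<Rightarrow> bool" where
  "valid_links N E \<longleftrightarrow> E \<subseteq> {(i,j). i \<le> N \<and> 1 \<le> j \<and> j \<le> Suc N \<and> i \<noteq> j}"

definition path_links :: "nat list \<Rightarrow> (nat \<times> nat) set" where
  "path_links p = set (zip p (tl p))"

definition paths :: "nat \<Rightarrow> (nat \<times> nat) set \<Rightarrow> nat list set" where
  "paths N E = {p. p \<noteq> [] \<and> distinct p \<and> hd p = 0 \<and> last p = Suc N \<and> path_links p \<subseteq> E}"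

definition path_cap :: "(nat \<Rightarrow> nat \<Rightarrow> real) \<Rightarrow> nat list \<Rightarrow> real" where
  "path_cap l p = Min {l j i | i j. (i, j) \<in> path_links p}"

definition frac :: "(nat \<Rightarrow> nat \<Rightarrow> real) \<Rightarrow> nat list \<Rightarrow> nat \<Rightarrow> nat \<Rightarrow> real" where
  "frac l p j i = path_cap l p / l j i"

definition nx :: "nat list \<Rightarrow> nat \<Rightarrow> nat" where
  "nx p i = (THE j. (i, j) \<in> path_links p)"

definition pr :: "nat list \<Rightarrow> nat \<Rightarrow> nat" where
  "pr p i = (THE k. (k, i) \<in> path_links p)"

definition P1_feasible :: "nat \<Rightarrow> (nat \<times> nat) set \<Rightarrow> (nat \<Rightarrow> nat \<Rightarrow> real) \<Rightarrow> (nat list \<Rightarrow> real) \<Rightarrow> bool" where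
  "P1_feasible N E l x \<longleftrightarrow>
     (\<forall>p \<in> paths N E. x p \<ge> 0) \<and>
     (\<forall>i \<in> {0..N}. (\<Sum>p \<in> {p \<in> paths N E. i \<in> set p}. x p * frac l p (nx p i) i) \<le> 1) \<and>
     (\<forall>i \<in> {1..Suc N}. (\<Sum>p \<in> {p \<in> paths N E. i \<in> set p}. x p * frac l p i (pr p i)) \<le> 1)"

definition P1_objective :: "nat \<Rightarrow> (nat \<times> nat) set \<Rightarrow> (nat \<Rightarrow> nat \<Rightarrow> real) \<Rightarrow> (nat list \<Rightarrow> real) \<Rightarrow> real" where
  "P1_objective N E l x = (\<Sum>p \<in> paths N E. x p * path_cap l p)"

definition P1_optimal :: "nat \<Rightarrow> (nat \<times> nat) set \<Rightarrow> (nat \<Rightarrow> nat \<Rightarrow> real) \<Rightarrow> (nat list \<Rightarrow> real) \<Rightarrow> bool" where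
  "P1_optimal N E l x \<longleftrightarrow> P1_feasible N E l x \<and>
     (\<forall>y. P1_feasible N E l y \<longrightarrow> P1_objective N E l y \<le> P1_objective N E l x)"

end

theory Submission
  imports Defs "HOL-Analysis.Analysis"
begin

text \<open>P1 is a packing LP with finitely many variables (the paths) and \<open>2N + 2\<close> constraints,
  one per transmitting and one per receiving node. Its feasible region is a compact polytope,
  because the source constraint has a positive coefficient for every path, so an optimum exists.
  If an optimum used more paths than there are constraints, some nonzero direction supported on
  its positive paths would leave every constraint unchanged; choosing its sign so that the
  objective does not decrease, it must lower some path (the source row is positive), and moving
  along it until the first coordinate hits zero gives an optimum with a smaller support.\<close>

lemma exists_kernel_vector_on:
  fixes a :: "nat \<Rightarrow> 'p \<Rightarrow> real"
  assumes "finite S" "k < card S"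
  shows "\<exists>d. (\<forall>s. s \<notin> S \<longrightarrow> d s = 0) \<and> (\<exists>s\<in>S. d s \<noteq> 0) \<and>
             (\<forall>j<k. (\<Sum>s\<in>S. a j s * d s) = 0)"
  using assms
proof (induction k arbitrary: S a)
  case 0
  then obtain s0 where "s0 \<in> S" by fastforce
  then show ?case by (intro exI[of _ "\<lambda>s. if s = s0 then 1 else 0"]) auto
next
  case (Suc k)
  show ?case
  proof (cases "\<forall>s\<in>S. a k s = 0")
    case True
    obtain d where d: "\<forall>s. s \<notin> S \<longrightarrow> d s = 0" "\<exists>s\<in>S. d s \<noteq> 0"
      "\<forall>j<k. (\<Sum>s\<in>S. a j s * d s) = 0"
      using Suc.IH[of S a] Suc.prems by auto
    then have "\<forall>j<Suc k. (\<Sum>s\<in>S. a j s * d s) = 0" using True by (auto simp: less_Suc_eq)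
    with d show ?thesis by blast
  next
    case False
    then obtain s0 where s0: "s0 \<in> S" "a k s0 \<noteq> 0" by auto
    define S' where "S' = S - {s0}"
    \<comment> \<open>Gaussian elimination of the equation \<open>k\<close> against the variable \<open>s0\<close>.\<close>
    define b where "b j s = a j s - a j s0 * a k s / a k s0" for j s
    have "finite S'" "k < card S'" using Suc.prems s0 by (auto simp: S'_def)
    from Suc.IH[OF this, of b] obtain d' where d':
      "\<forall>s. s \<notin> S' \<longrightarrow> d' s = 0" "\<exists>s\<in>S'. d' s \<noteq> 0" "\<forall>j<k. (\<Sum>s\<in>S'. b j s * d' s) = 0"
      by blast
    define t where "t = - (\<Sum>s\<in>S'. a k s * d' s) / a k s0"
    define d where "d = d'(s0 := t)"
    have split: "(\<Sum>s\<in>S. a j s * d s) = a j s0 * t + (\<Sum>s\<in>S'. a j s * d' s)" for j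
    proof -
      have "(\<Sum>s\<in>S. a j s * d s) = a j s0 * d s0 + (\<Sum>s\<in>S'. a j s * d s)"
        using Suc.prems(1) s0(1) by (simp add: S'_def sum.remove)
      also have "(\<Sum>s\<in>S'. a j s * d s) = (\<Sum>s\<in>S'. a j s * d' s)"
        by (rule sum.cong) (auto simp: d_def S'_def)
      finally show ?thesis by (simp add: d_def)
    qed
    have "(\<Sum>s\<in>S. a j s * d s) = 0" if "j < Suc k" for j
    proof (cases "j = k")
      case True
      then show ?thesis using split[of k] s0 by (simp add: t_def)
    next
      case False
      with that have "0 = (\<Sum>s\<in>S'. b j s * d' s)" using d'(3) by auto
      also have "\<dots> = (\<Sum>s\<in>S'. a j s * d' s) - a j s0 / a k s0 * (\<Sum>s\<in>S'. a k s * d' s)"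
        by (simp add: b_def algebra_simps sum_subtractf sum_distrib_left)
      finally show ?thesis using split[of j] s0 by (simp add: t_def field_simps)
    qed
    moreover have "\<forall>s. s \<notin> S \<longrightarrow> d s = 0" "\<exists>s\<in>S. d s \<noteq> 0"
      using d'(1,2) s0 by (auto simp: d_def S'_def)
    ultimately show ?thesis by blast
  qed
qed

definition packing_feasible :: "'p set \<Rightarrow> (nat \<Rightarrow> 'p \<Rightarrow> real) \<Rightarrow> nat \<Rightarrow> ('p \<Rightarrow> real) \<Rightarrow> bool" where
  "packing_feasible P a m x \<longleftrightarrow> (\<forall>p\<in>P. 0 \<le> x p) \<and> (\<forall>j<m. (\<Sum>p\<in>P. a j p * x p) \<le> 1)"

definition lp_value :: "'p set \<Rightarrow> ('p \<Rightarrow> real) \<Rightarrow> ('p \<Rightarrow> real) \<Rightarrow> real" where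
  "lp_value P c x = (\<Sum>p\<in>P. x p * c p)"

definition pos_support :: "'p set \<Rightarrow> ('p \<Rightarrow> real) \<Rightarrow> 'p set" where
  "pos_support P x = {p\<in>P. 0 < x p}"

lemma packing_feasible_le_inverse_row:
  fixes a :: "nat \<Rightarrow> 'p \<Rightarrow> real"
  assumes "finite P" "0 < m" "\<forall>p\<in>P. 0 < a 0 p" "packing_feasible P a m x" "p \<in> P"
  shows "x p \<le> 1 / a 0 p"
proof -
  have "a 0 p * x p \<le> (\<Sum>q\<in>P. a 0 q * x q)"
    using assms by (intro member_le_sum) (auto simp: packing_feasible_def)
  also have "\<dots> \<le> 1" using assms(2,4) by (auto simp: packing_feasible_def)
  finally show ?thesis using assms(3,5) by (simp add: field_simps)
qed

lemma closed_packing_feasible: "closed {x. packing_feasible P a m x}"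
proof -
  have "{x. packing_feasible P a m x} =
        {x. \<forall>p. p \<in> P \<longrightarrow> 0 \<le> x p} \<inter> {x. \<forall>j. j < m \<longrightarrow> (\<Sum>p\<in>P. a j p * x p) \<le> 1}"
    by (auto simp: packing_feasible_def)
  also have "closed \<dots>"
    by (intro closed_Int closed_Collect_all closed_Collect_imp open_Collect_const
        closed_Collect_le continuous_intros) auto
  finally show ?thesis .
qed

lemma packing_lp_has_optimum:
  fixes a :: "nat \<Rightarrow> 'p \<Rightarrow> real"
  assumes fin: "finite P" and m: "0 < m" and pos: "\<forall>p\<in>P. 0 < a 0 p"
  shows "\<exists>x. packing_feasible P a m x \<and>
             (\<forall>y. packing_feasible P a m y \<longrightarrow> lp_value P c y \<le> lp_value P c x)"
proof -
  define box where "box = PiE UNIV (\<lambda>p. if p \<in> P then {0..1 / a 0 p} else {0::real})"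
  define F where "F = box \<inter> {x. packing_feasible P a m x}"
  have "compactin (product_topology (\<lambda>_. euclidean) UNIV) box"
    unfolding box_def compactin_PiE by auto
  then have "compact F"
    unfolding F_def by (intro compact_Int_closed closed_packing_feasible)
      (simp add: euclidean_product_topology)
  moreover have "(\<lambda>_. 0) \<in> F" using pos by (auto simp: F_def box_def packing_feasible_def less_imp_le)
  moreover have "continuous_on F (lp_value P c)"
    unfolding lp_value_def
    by (intro continuous_intros continuous_on_subset[OF continuous_on_product_coordinates]) auto
  ultimately obtain x where x: "x \<in> F" "\<forall>y\<in>F. lp_value P c y \<le> lp_value P c x"
    using continuous_attains_sup by blast
  have "lp_value P c y \<le> lp_value P c x" if y: "packing_feasible P a m y" for y
  proof -
    \<comment> \<open>Variables outside \<open>P\<close> are unconstrained; zeroing them moves \<open>y\<close> into the box.\<close>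
    define y' where "y' p = (if p \<in> P then y p else 0)" for p
    have "y' \<in> F"
      using y packing_feasible_le_inverse_row[OF fin m pos y]
      by (auto simp: F_def box_def y'_def packing_feasible_def)
    moreover have "lp_value P c y' = lp_value P c y"
      unfolding lp_value_def by (rule sum.cong) (auto simp: y'_def)
    ultimately show ?thesis using x(2) by metis
  qed
  then show ?thesis using x(1) by (auto simp: F_def)
qed

lemma packing_kernel_direction:
  fixes a :: "nat \<Rightarrow> 'p \<Rightarrow> real"
  assumes fin: "finite P" and m: "0 < m" and pos: "\<forall>p\<in>P. 0 < a 0 p"
    and S: "S \<subseteq> P" "m < card S"
  obtains d where "\<forall>p. p \<notin> S \<longrightarrow> d p = 0" "\<forall>j<m. (\<Sum>p\<in>P. a j p * d p) = 0"
    "0 \<le> (\<Sum>p\<in>P. d p * c p)" "\<exists>s\<in>S. d s < 0"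
proof -
  have fS: "finite S" using fin S(1) finite_subset by blast
  obtain d0 where d0: "\<forall>s. s \<notin> S \<longrightarrow> d0 s = 0" "\<exists>s\<in>S. d0 s \<noteq> 0"
    "\<forall>j<m. (\<Sum>s\<in>S. a j s * d0 s) = 0"
    using exists_kernel_vector_on[OF fS S(2), of a] by blast
  define \<sigma> :: real where "\<sigma> = (if 0 \<le> (\<Sum>p\<in>P. d0 p * c p) then 1 else -1)"
  define d where "d p = \<sigma> * d0 p" for p
  have d_out: "\<forall>p. p \<notin> S \<longrightarrow> d p = 0" using d0(1) by (simp add: d_def)
  have on_S: "(\<Sum>p\<in>P. f p * d p) = (\<Sum>p\<in>S. f p * d p)" for f
    using fin S(1) d_out by (intro sum.mono_neutral_right) auto
  have kernel_S: "(\<Sum>s\<in>S. a j s * d s) = 0" if "j < m" for j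
  proof -
    have "(\<Sum>s\<in>S. a j s * d s) = \<sigma> * (\<Sum>s\<in>S. a j s * d0 s)"
      by (simp add: d_def sum_distrib_left mult.left_commute)
    then show ?thesis using d0(3) that by simp
  qed
  have "0 \<le> (\<Sum>p\<in>P. d p * c p)"
    by (simp add: d_def \<sigma>_def sum_distrib_left mult.assoc sum_negf)
  moreover have "\<exists>s\<in>S. d s < 0"
  proof (rule ccontr)
    assume "\<not> ?thesis"
    then have nonneg: "\<forall>s\<in>S. 0 \<le> a 0 s * d s"
      using pos S(1) by (force simp: not_less zero_le_mult_iff)
    have "(\<Sum>s\<in>S. a 0 s * d s) = 0" by (rule kernel_S[OF m])
    then have "\<forall>s\<in>S. a 0 s * d s = 0" using nonneg by (simp add: sum_nonneg_eq_0_iff[OF fS])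
    then have "\<forall>s\<in>S. d s = 0" using pos S(1) by (metis subsetD mult_eq_0_iff less_irrefl)
    then show False using d0(2) by (auto simp: d_def \<sigma>_def split: if_splits)
  qed
  ultimately show thesis using that d_out kernel_S on_S by simp
qed

lemma packing_sparsify_step:
  fixes a :: "nat \<Rightarrow> 'p \<Rightarrow> real"
  assumes fin: "finite P" and m: "0 < m" and pos: "\<forall>p\<in>P. 0 < a 0 p"
    and x: "packing_feasible P a m x" and big: "m < card (pos_support P x)"
  obtains y where "packing_feasible P a m y" "lp_value P c x \<le> lp_value P c y"
    "pos_support P y \<subset> pos_support P x"
proof -
  define S where "S = pos_support P x"
  have SP: "S \<subseteq> P" by (auto simp: S_def pos_support_def)
  obtain d where d: "\<forall>p. p \<notin> S \<longrightarrow> d p = 0" "\<forall>j<m. (\<Sum>p\<in>P. a j p * d p) = 0"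
    "0 \<le> (\<Sum>p\<in>P. d p * c p)" "\<exists>s\<in>S. d s < 0"
    using packing_kernel_direction[where a = a and c = c, OF fin m pos SP big[folded S_def]] by blast
  define D where "D = {s\<in>S. d s < 0}"
  have D: "finite D" "D \<noteq> {}" using fin SP d(4) finite_subset by (fastforce simp: D_def)+
  \<comment> \<open>Ratio test: the largest step along \<open>d\<close> keeping all coordinates nonnegative.\<close>
  define t where "t = Min ((\<lambda>s. x s / - d s) ` D)"
  have "t \<in> (\<lambda>s. x s / - d s) ` D" unfolding t_def using D by (intro Min_in) auto
  then obtain s1 where s1: "s1 \<in> D" "t = x s1 / - d s1" by blast
  have t_le: "t \<le> x s / - d s" if "s \<in> D" for s
    using D that by (auto simp: t_def)
  have t0: "0 \<le> t" using s1 by (simp add: D_def S_def pos_support_def divide_pos_neg less_imp_le)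
  define y where "y p = x p + t * d p" for p
  have "0 \<le> y p" if "p \<in> P" for p
  proof (cases "p \<in> D")
    case True
    then show ?thesis using t_le[OF True] by (simp add: y_def D_def field_simps)
  next
    case False
    then have "0 \<le> d p" using d(1) by (cases "p \<in> S") (auto simp: D_def)
    then show ?thesis using x that t0 by (simp add: y_def packing_feasible_def)
  qed
  moreover have "(\<Sum>p\<in>P. a j p * y p) = (\<Sum>p\<in>P. a j p * x p)" if "j < m" for j
    using d(2) that by (simp add: y_def algebra_simps sum.distrib flip: sum_distrib_left)
  ultimately have "packing_feasible P a m y" using x by (simp add: packing_feasible_def)
  moreover have "lp_value P c y = lp_value P c x + t * (\<Sum>p\<in>P. d p * c p)"
    by (simp add: lp_value_def y_def algebra_simps sum.distrib sum_distrib_left)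
  then have "lp_value P c x \<le> lp_value P c y" using d(3) t0 by simp
  moreover have "pos_support P y \<subseteq> S - {s1}"
    using d(1) s1 by (auto simp: pos_support_def S_def y_def D_def)
  then have "pos_support P y \<subset> S" using s1 by (auto simp: D_def)
  ultimately show thesis using that S_def by blast
qed

lemma packing_sparsify:
  fixes a :: "nat \<Rightarrow> 'p \<Rightarrow> real"
  assumes fin: "finite P" and m: "0 < m" and pos: "\<forall>p\<in>P. 0 < a 0 p"
    and x: "packing_feasible P a m x"
  shows "\<exists>y. packing_feasible P a m y \<and> lp_value P c x \<le> lp_value P c y \<and>
             card (pos_support P y) \<le> m"
  using x
proof (induction "card (pos_support P x)" arbitrary: x rule: less_induct)
  case less
  show ?case
  proof (cases "m < card (pos_support P x)")
    case True
    then obtain y where y: "packing_feasible P a m y" "lp_value P c x \<le> lp_value P c y"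
      "pos_support P y \<subset> pos_support P x"
      using packing_sparsify_step[where a = a and c = c, OF fin m pos less.prems] by blast
    have "card (pos_support P y) < card (pos_support P x)"
      using y(3) fin by (intro psubset_card_mono) (auto simp: pos_support_def)
    then show ?thesis using less.hyps[OF _ y(1)] y(2) order_trans by blast
  qed (use less.prems in auto)
qed

lemma packing_lp_has_sparse_optimum:
  fixes a :: "nat \<Rightarrow> 'p \<Rightarrow> real"
  assumes "finite P" "0 < m" "\<forall>p\<in>P. 0 < a 0 p"
  shows "\<exists>x. packing_feasible P a m x \<and>
             (\<forall>y. packing_feasible P a m y \<longrightarrow> lp_value P c y \<le> lp_value P c x) \<and>
             card (pos_support P x) \<le> m"
proof -
  obtain x0 where x0: "packing_feasible P a m x0"
    "\<forall>y. packing_feasible P a m y \<longrightarrow> lp_value P c y \<le> lp_value P c x0"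
    using packing_lp_has_optimum[where a = a and c = c, OF assms] by blast
  obtain x where "packing_feasible P a m x" "lp_value P c x0 \<le> lp_value P c x"
    "card (pos_support P x) \<le> m"
    using packing_sparsify[where a = a and c = c, OF assms x0(1)] by blast
  then show ?thesis using x0(2) order_trans by blast
qed

lemma path_links_conv_nth: "path_links p = {(p ! k, p ! Suc k) | k. Suc k < length p}"
  unfolding path_links_def set_zip by (auto simp: nth_tl)

lemma source_link_in_path:
  assumes "p \<in> paths N E"
  shows "(0, p ! 1) \<in> path_links p"
proof -
  have "p \<noteq> []" "hd p = 0" "last p = Suc N" using assms by (auto simp: paths_def)
  then have "p ! 0 = 0" "Suc 0 < length p"
    by (auto simp: hd_conv_nth) (cases p; cases "tl p"; auto)
  then show ?thesis unfolding path_links_conv_nth by force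
qed

lemma nx_source:
  assumes "p \<in> paths N E"
  shows "nx p 0 = p ! 1"
  unfolding nx_def
proof (rule the_equality)
  show "(0, p ! 1) \<in> path_links p" using source_link_in_path[OF assms] .
next
  fix j assume "(0, j) \<in> path_links p"
  then obtain k where k: "p ! k = 0" "j = p ! Suc k" "Suc k < length p"
    unfolding path_links_conv_nth by auto
  have "distinct p" "p ! 0 = 0" "p \<noteq> []" using assms by (auto simp: paths_def hd_conv_nth)
  then have "k = 0" using k nth_eq_iff_index_eq[of p k 0] by auto
  then show "j = p ! 1" using k by simp
qed

lemma path_cap_pos:
  assumes "p \<in> paths N E" "\<forall>(i, j) \<in> E. 0 < l j i"
  shows "0 < path_cap l p"
proof -
  have "{l j i | i j. (i, j) \<in> path_links p} = (\<lambda>(i, j). l j i) ` path_links p" by force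
  moreover have "finite (path_links p)" by (simp add: path_links_def)
  moreover have "path_links p \<noteq> {}" using source_link_in_path[OF assms(1)] by blast
  moreover have "path_links p \<subseteq> E" using assms(1) by (simp add: paths_def)
  ultimately show ?thesis unfolding path_cap_def using assms(2) by (subst Min_gr_iff) auto
qed

lemma set_path_subset:
  assumes "valid_links N E" "p \<in> paths N E"
  shows "set p \<subseteq> {0..Suc N}"
proof
  fix v assume "v \<in> set p"
  then obtain k where k: "k < length p" "v = p ! k" by (auto simp: in_set_conv_nth)
  show "v \<in> {0..Suc N}"
  proof (cases "Suc k < length p")
    case True
    then have "(p ! k, p ! Suc k) \<in> E" using assms(2) by (force simp: paths_def path_links_conv_nth)
    then show ?thesis using assms(1) k by (auto simp: valid_links_def)
  next
    case False
    then have "k = length p - 1" using k by simp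
    then have "v = last p" using k assms(2) by (auto simp: paths_def last_conv_nth)
    then show ?thesis using assms(2) by (simp add: paths_def)
  qed
qed

lemma finite_paths:
  assumes "valid_links N E"
  shows "finite (paths N E)"
proof -
  have "length p \<le> Suc (Suc N)" if "p \<in> paths N E" for p
  proof -
    have "length p = card (set p)" using that by (simp add: paths_def distinct_card)
    also have "\<dots> \<le> card {0..Suc N}" using set_path_subset[OF assms that] by (intro card_mono) auto
    finally show ?thesis by simp
  qed
  then have "paths N E \<subseteq> {xs. set xs \<subseteq> {0..Suc N} \<and> length xs \<le> Suc (Suc N)}"
    using set_path_subset[OF assms] by blast
  then show ?thesis using finite_lists_length_le[of "{0..Suc N}"] by (rule finite_subset) simp
qed

text \<open>Row \<open>j \<le> N\<close> is the transmit constraint of node \<open>j\<close>; row \<open>N + i\<close> with \<open>1 \<le> i \<le> N + 1\<close>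
  is the receive constraint of node \<open>i\<close>.\<close>
definition P1_row :: "nat \<Rightarrow> (nat \<Rightarrow> nat \<Rightarrow> real) \<Rightarrow> nat \<Rightarrow> nat list \<Rightarrow> real" where
  "P1_row N l j p =
     (if j \<le> N then (if j \<in> set p then frac l p (nx p j) j else 0)
      else (if j - N \<in> set p then frac l p (j - N) (pr p (j - N)) else 0))"

lemma P1_feasible_iff_packing:
  assumes fin: "finite (paths N E)"
  shows "P1_feasible N E l x \<longleftrightarrow> packing_feasible (paths N E) (P1_row N l) (2 * N + 2) x"
proof -
  let ?row = "\<lambda>j. \<Sum>p\<in>paths N E. P1_row N l j p * x p"
  have transmit: "(\<Sum>p \<in> {p \<in> paths N E. i \<in> set p}. x p * frac l p (nx p i) i) = ?row i"
    if "i \<le> N" for i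
    using that by (simp add: sum.inter_filter[OF fin] P1_row_def; intro sum.cong; simp)
  have receive: "(\<Sum>p \<in> {p \<in> paths N E. i \<in> set p}. x p * frac l p i (pr p i)) = ?row (i + N)"
    if "1 \<le> i" for i
    using that by (simp add: sum.inter_filter[OF fin] P1_row_def; intro sum.cong; simp)
  have "(\<forall>j<2 * N + 2. ?row j \<le> 1) \<longleftrightarrow>
        (\<forall>i \<in> {0..N}. ?row i \<le> 1) \<and> (\<forall>i \<in> {1..Suc N}. ?row (i + N) \<le> 1)"
  proof safe
    fix j assume "\<forall>i \<in> {0..N}. ?row i \<le> 1" "\<forall>i \<in> {1..Suc N}. ?row (i + N) \<le> 1" "j < 2 * N + 2"
    then show "?row j \<le> 1"
      by (cases "j \<le> N") (auto dest!: bspec[of _ _ "j - N"])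
  qed auto
  then show ?thesis unfolding P1_feasible_def packing_feasible_def using transmit receive by simp
qed

lemma P1_row_source_pos:
  assumes p: "p \<in> paths N E" and l_pos: "\<forall>(i, j) \<in> E. 0 < l j i"
  shows "0 < P1_row N l 0 p"
proof -
  have "0 \<in> set p" using p hd_in_set[of p] by (simp add: paths_def)
  moreover have "(0, p ! 1) \<in> E" using source_link_in_path[OF p] p by (auto simp: paths_def)
  ultimately show ?thesis using l_pos path_cap_pos[OF p l_pos]
    by (auto simp: P1_row_def frac_def nx_source[OF p])
qed

theorem lemma3:
  fixes N :: nat and E :: "(nat \<times> nat) set" and l :: "nat \<Rightarrow> nat \<Rightarrow> real"
  assumes "valid_links N E"
    and "\<forall>(i, j) \<in> E. l j i \<in> \<rat> \<and> l j i > 0"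
  shows "\<exists>x. P1_optimal N E l x \<and> card {p \<in> paths N E. x p > 0} \<le> 2 * N + 2"
proof -
  have l_pos: "\<forall>(i, j) \<in> E. 0 < l j i" using assms(2) by auto
  have fin: "finite (paths N E)" using finite_paths[OF assms(1)] .
  have source_row_pos: "\<forall>p\<in>paths N E. 0 < P1_row N l 0 p"
    using P1_row_source_pos l_pos by blast
  have "0 < 2 * N + 2" by simp
  from packing_lp_has_sparse_optimum[where a = "P1_row N l" and c = "path_cap l", OF fin this source_row_pos]
  obtain x where "packing_feasible (paths N E) (P1_row N l) (2 * N + 2) x"
    "\<forall>y. packing_feasible (paths N E) (P1_row N l) (2 * N + 2) y \<longrightarrow>
         lp_value (paths N E) (path_cap l) y \<le> lp_value (paths N E) (path_cap l) x"
    "card (pos_support (paths N E) x) \<le> 2 * N + 2" by blast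
  then show ?thesis
    unfolding P1_optimal_def P1_feasible_iff_packing[OF fin] pos_support_def
      P1_objective_def lp_value_def[symmetric] by blast
qed

end
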